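(* Let $q\geq 2$ be an integer and $u_0,r$ positive integers with $\gcd(u_0+r,q)=1$. Define $u_n=u_0+r[n]_q$ for $n\ge1$, where $[n]_q=\frac{q^n-1}{q-1}$. Then for all positive integers $n,m$ with $m\leq\lfloor n/2\rfloor$, \[\mathrm{lcm}(u_m,u_{m+1},\dots,u_n)\geq \gcd(u_0,r)\left(\frac{r}{\gcd(u_0,r)}\right)^{\frac n2+1}q^{\frac{n(n-2)}{4}}.\] *)

theory Defs
  imports Complex_Main
begin

text \<open>The q-integer [n]_q = (q^n - 1)/(q - 1) = 1 + q + ... + q^(n-1) (exact division for q >= 2).\<close>
definition qint :: "nat \<Rightarrow> nat \<Rightarrow> nat" where
  "qint q n = (q ^ n - 1) div (q - 1)"

definition useq :: "nat \<Rightarrow> nat \<Rightarrow> nat \<Rightarrow> nat \<Rightarrow> nat" where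
  "useq q u0 r n = u0 + r * qint q n"

end

theory Submission
  imports Defs "HOL-Computational_Algebra.Primes"
begin

(* Write d = gcd u0 r, u0 = d a and r = d b, so that u_k = d v_k with v_k = a + b [k]_q and
   coprime a b. For 1 <= j < k we have v_k - v_j = b q^j [k-j]_q, and v_j is coprime to b
   (because coprime a b) and to q (because v_j = a + b (mod q)); hence gcd v_j v_k divides [k-j]_q.
   Comparing p-adic valuations, this makes prod_{k=h..n} v_k divide
   lcm (v_h, ..., v_n) * prod_{t=1..n-h} [t]_q.  For h = n div 2 the bound v_{h+t} >= b q^h [t]_q
   then gives lcm (u_m, ..., u_n) >= d b^(n-h+1) q^(h-1+h(n-h)), which dominates the claim. *)

lemma card_prime_power_dvd:
  fixes p y :: nat
  assumes "p \<noteq> 1" "y > 0"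
  shows "card {e\<in>{1..B}. p ^ e dvd y} = min B (multiplicity p y)"
proof -
  have "y \<noteq> 0" "\<not> is_unit p"
    using assms by simp_all
  then have "p ^ e dvd y \<longleftrightarrow> e \<le> multiplicity p y" for e
    by (rule power_dvd_iff_le_multiplicity)
  then have "{e\<in>{1..B}. p ^ e dvd y} = {1..min B (multiplicity p y)}"
    by (simp add: set_eq_iff)
  then show ?thesis
    by simp
qed

lemma card_filter_eq_sum_of_bool:
  "finite A \<Longrightarrow> card {x\<in>A. P x} = (\<Sum>x\<in>A. of_bool (P x))"
  by (simp add: Collect_conj_eq Int_commute)

lemma sum_card_filter_swap:
  assumes "finite A" "finite E"
  shows "(\<Sum>k\<in>A. card {e\<in>E. P e k}) = (\<Sum>e\<in>E. card {k\<in>A. P e k})"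
  using sum.swap[of "\<lambda>k e. of_bool (P e k) :: nat" E A] assms
  by (simp add: card_filter_eq_sum_of_bool)

lemma card_filter_le_card_gaps:
  fixes m n :: nat
  assumes "\<And>j k. j \<in> {m..n} \<Longrightarrow> k \<in> {m..n} \<Longrightarrow> j < k \<Longrightarrow> P j \<Longrightarrow> P k \<Longrightarrow> Q (k - j)"
  shows "card {k\<in>{m..n}. P k} \<le> of_bool (\<exists>k\<in>{m..n}. P k) + card {t\<in>{1..n-m}. Q t}"
proof (cases "\<exists>k\<in>{m..n}. P k")
  case False
  then have "{k\<in>{m..n}. P k} = {}"
    by auto
  then show ?thesis
    by (metis card.empty le0)
next
  case True
  define S where "S = {k\<in>{m..n}. P k}"
  define k0 where "k0 = Min S"
  have S: "finite S" "S \<noteq> {}"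
    using True by (auto simp: S_def)
  then have k0: "k0 \<in> S" "\<And>k. k \<in> S \<Longrightarrow> k0 \<le> k"
    by (simp_all add: k0_def)
  have "card (S - {k0}) \<le> card {t\<in>{1..n-m}. Q t}"
  proof (rule card_inj_on_le)
    show "inj_on (\<lambda>k. k - k0) (S - {k0})"
      using k0(2) by (force simp: inj_on_def)
    show "(\<lambda>k. k - k0) ` (S - {k0}) \<subseteq> {t\<in>{1..n-m}. Q t}"
      using k0 assms by (force simp: S_def)
  qed simp
  moreover have "card S = Suc (card (S - {k0}))"
    using card_Suc_Diff1[OF S(1) k0(1)] by simp
  ultimately show ?thesis
    using True by (simp add: S_def)
qed

lemma prod_dvd_Lcm_mult_prod:
  fixes x c :: "nat \<Rightarrow> nat" and m n :: nat
  assumes x_pos: "\<And>k. k \<in> {m..n} \<Longrightarrow> x k > 0"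
    and c_pos: "\<And>t. t \<in> {1..n-m} \<Longrightarrow> c t > 0"
    and gcd_dvd: "\<And>j k. j \<in> {m..n} \<Longrightarrow> k \<in> {m..n} \<Longrightarrow> j < k \<Longrightarrow> gcd (x j) (x k) dvd c (k - j)"
  shows "(\<Prod>k\<in>{m..n}. x k) dvd Lcm (x ` {m..n}) * (\<Prod>t\<in>{1..n-m}. c t)"
proof (rule multiplicity_le_imp_dvd)
  define P where "P = (\<Prod>k\<in>{m..n}. x k)"
  define L where "L = Lcm (x ` {m..n})"
  define C where "C = (\<Prod>t\<in>{1..n-m}. c t)"
  have x_nz: "0 \<notin> x ` {m..n}" and c_nz: "0 \<notin> c ` {1..n-m}"
    using x_pos c_pos by fastforce+
  have "L \<noteq> 0"
    using x_nz by (simp add: L_def Lcm_0_iff)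
  then have L_pos: "L > 0"
    by simp
  have C_pos: "C > 0"
    using c_pos by (simp add: C_def prod_pos)
  show "(\<Prod>k\<in>{m..n}. x k) \<noteq> 0"
    using x_pos by (simp add: prod_pos)
  fix p :: nat
  assume p: "prime p"
  then have "p \<noteq> 1"
    by auto
  \<comment> \<open>Valuations become counts of exponents e \<le> B, which can be exchanged with the sum over k.\<close>
  define B where "B = multiplicity p P"
  have "multiplicity p P = (\<Sum>k\<in>{m..n}. multiplicity p (x k))"
    unfolding P_def using p x_nz by (intro prime_elem_multiplicity_prod_distrib) auto
  also have "\<dots> = (\<Sum>k\<in>{m..n}. card {e\<in>{1..B}. p ^ e dvd x k})"
  proof (rule sum.cong[OF refl])
    fix k
    assume k: "k \<in> {m..n}"
    then have "multiplicity p (x k) \<le> B"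
      unfolding B_def P_def using x_nz by (intro dvd_imp_multiplicity_le dvd_prodI) auto
    then show "multiplicity p (x k) = card {e\<in>{1..B}. p ^ e dvd x k}"
      using card_prime_power_dvd[OF \<open>p \<noteq> 1\<close> x_pos[OF k]] by simp
  qed
  also have "\<dots> = (\<Sum>e\<in>{1..B}. card {k\<in>{m..n}. p ^ e dvd x k})"
    by (rule sum_card_filter_swap) auto
  also have "\<dots> \<le> (\<Sum>e\<in>{1..B}. of_bool (\<exists>k\<in>{m..n}. p ^ e dvd x k)
                                   + card {t\<in>{1..n-m}. p ^ e dvd c t})"
    by (intro sum_mono card_filter_le_card_gaps dvd_trans[OF _ gcd_dvd] gcd_greatest)
  also have "\<dots> = (\<Sum>e\<in>{1..B}. of_bool (\<exists>k\<in>{m..n}. p ^ e dvd x k))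
                   + (\<Sum>e\<in>{1..B}. card {t\<in>{1..n-m}. p ^ e dvd c t})"
    by (rule sum.distrib)
  also have "\<dots> = card {e\<in>{1..B}. \<exists>k\<in>{m..n}. p ^ e dvd x k}
                   + (\<Sum>t\<in>{1..n-m}. card {e\<in>{1..B}. p ^ e dvd c t})"
    by (simp only: card_filter_eq_sum_of_bool[symmetric] finite_atLeastAtMost
        sum_card_filter_swap[of "{1..n-m}" "{1..B}", symmetric])
  also have "\<dots> \<le> multiplicity p L + (\<Sum>t\<in>{1..n-m}. multiplicity p (c t))"
  proof (intro add_mono sum_mono)
    have "{e\<in>{1..B}. \<exists>k\<in>{m..n}. p ^ e dvd x k} \<subseteq> {e\<in>{1..B}. p ^ e dvd L}"
      unfolding L_def by (auto intro: dvd_trans dvd_Lcm)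
    then have "card {e\<in>{1..B}. \<exists>k\<in>{m..n}. p ^ e dvd x k} \<le> card {e\<in>{1..B}. p ^ e dvd L}"
      by (intro card_mono) auto
    then show "card {e\<in>{1..B}. \<exists>k\<in>{m..n}. p ^ e dvd x k} \<le> multiplicity p L"
      using card_prime_power_dvd[OF \<open>p \<noteq> 1\<close> L_pos] by simp
  next
    fix t
    assume "t \<in> {1..n-m}"
    then show "card {e\<in>{1..B}. p ^ e dvd c t} \<le> multiplicity p (c t)"
      using card_prime_power_dvd[OF \<open>p \<noteq> 1\<close> c_pos] by simp
  qed
  also have "(\<Sum>t\<in>{1..n-m}. multiplicity p (c t)) = multiplicity p C"
    unfolding C_def using p c_nz by (intro prime_elem_multiplicity_prod_distrib[symmetric]) auto
  also have "multiplicity p L + multiplicity p C = multiplicity p (L * C)"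
    using p L_pos C_pos by (simp add: prime_elem_multiplicity_mult_distrib)
  finally show "multiplicity p (\<Prod>k\<in>{m..n}. x k) \<le> multiplicity p (Lcm (x ` {m..n}) * (\<Prod>t\<in>{1..n-m}. c t))"
    by (simp add: P_def L_def C_def)
qed

lemma qint_eq_sum:
  assumes "q \<ge> 2"
  shows "qint q n = (\<Sum>i<n. q ^ i)"
proof -
  have "int (q ^ n - 1) = int ((q - 1) * (\<Sum>i<n. q ^ i))"
    using assms power_diff_1_eq[of "int q" n] by simp
  then have "q ^ n - 1 = (q - 1) * (\<Sum>i<n. q ^ i)"
    by (simp only: of_nat_eq_iff)
  then show ?thesis
    using assms by (simp add: qint_def)
qed

lemma qint_0 [simp]: "qint q 0 = 0"
  by (simp add: qint_def)

lemma qint_Suc: "q \<ge> 2 \<Longrightarrow> qint q (Suc n) = qint q n + q ^ n"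
  by (simp add: qint_eq_sum)

lemma qint_add:
  assumes "q \<ge> 2"
  shows "qint q (s + t) = qint q s + q ^ s * qint q t"
proof (induction t)
  case 0
  then show ?case by simp
next
  case (Suc t)
  then show ?case by (simp add: qint_Suc[OF assms] power_add algebra_simps)
qed

lemma power_le_qint:
  assumes "q \<ge> 2" "k \<ge> 1"
  shows "q ^ (k - 1) \<le> qint q k"
  using qint_Suc[OF assms(1), of "k - 1"] assms(2) by simp

lemma qint_pos:
  assumes "q \<ge> 2" "k \<ge> 1"
  shows "qint q k > 0"
proof -
  have "0 < q ^ (k - 1)"
    using assms(1) by simp
  then show ?thesis
    using power_le_qint[OF assms] by linarith
qed

lemma useq_mult: "useq q (d * a) (d * b) k = d * useq q a b k"
  by (simp add: useq_def algebra_simps)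

lemma useq_add: "q \<ge> 2 \<Longrightarrow> useq q a b (j + t) = useq q a b j + b * q ^ j * qint q t"
  by (simp add: useq_def qint_add algebra_simps)

lemma useq_pos:
  assumes "q \<ge> 2" "k \<ge> 1" "a + b > 0"
  shows "useq q a b k > 0"
  using qint_pos[OF assms(1,2)] assms(3) by (simp add: useq_def)

lemma coprime_useq:
  assumes "q \<ge> 2" "j \<ge> 1" "coprime a b" "coprime (a + b) q"
  shows "coprime (useq q a b j) (b * q ^ j)"
proof -
  have "gcd b (useq q a b j) = gcd b a"
    using gcd_add_mult[of b "qint q j" a] by (simp add: useq_def ac_simps)
  then have "coprime (useq q a b j) b"
    using assms(3) by (simp add: coprime_iff_gcd_eq_1 gcd.commute)
  moreover have "useq q a b j = b * qint q (j - 1) * q + (a + b)"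
    using useq_add[OF assms(1), of a b 1 "j - 1"] assms(2) by (simp add: useq_def qint_Suc[OF assms(1)])
  then have "gcd q (useq q a b j) = gcd q (a + b)"
    by (simp add: gcd_add_mult)
  then have "coprime (useq q a b j) q"
    using assms(4) by (simp add: coprime_iff_gcd_eq_1 gcd.commute)
  ultimately show ?thesis
    by simp
qed

lemma gcd_useq_dvd_qint:
  assumes "q \<ge> 2" "1 \<le> j" "j \<le> k" "coprime a b" "coprime (a + b) q"
  shows "gcd (useq q a b j) (useq q a b k) dvd qint q (k - j)"
proof -
  let ?g = "gcd (useq q a b j) (useq q a b k)"
  have "useq q a b k = useq q a b j + b * q ^ j * qint q (k - j)"
    using useq_add[OF assms(1), of a b j "k - j"] assms(3) by simp
  then have "?g dvd b * q ^ j * qint q (k - j)"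
    by (metis dvd_add_right_iff gcd_dvd1 gcd_dvd2)
  moreover have "coprime ?g (b * q ^ j)"
    using coprime_useq[OF assms(1,2,4,5)] by (rule coprime_divisors[OF gcd_dvd1 dvd_refl])
  ultimately show ?thesis
    by (simp add: coprime_dvd_mult_right_iff)
qed

lemma Lcm_useq_ge:
  fixes q a b h n :: nat
  assumes q: "q \<ge> 2" and "coprime a b" "coprime (a + b) q" and h: "1 \<le> h" "h \<le> n"
  shows "b ^ (n - h + 1) * q ^ (h - 1 + h * (n - h)) \<le> Lcm (useq q a b ` {h..n})"
proof -
  let ?u = "useq q a b"
  define C where "C = (\<Prod>t\<in>{1..n-h}. qint q t)"
  have "a + b > 0"
    using \<open>coprime a b\<close> by (cases "a + b") auto
  then have u_pos: "?u k > 0" if "k \<in> {h..n}" for k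
    using useq_pos[OF q] that h by simp
  have C_pos: "C > 0"
    unfolding C_def by (rule prod_pos) (simp add: qint_pos[OF q])
  have "(\<Prod>k\<in>{h..n}. ?u k) dvd Lcm (?u ` {h..n}) * C"
    unfolding C_def using u_pos qint_pos[OF q] gcd_useq_dvd_qint[OF q] assms(2,3) h
    by (intro prod_dvd_Lcm_mult_prod) auto
  moreover have "0 \<notin> ?u ` {h..n}"
    using u_pos by (metis imageE less_irrefl)
  then have "Lcm (?u ` {h..n}) > 0"
    by (simp add: Lcm_0_iff zero_less_iff_neq_zero)
  ultimately have upper: "(\<Prod>k\<in>{h..n}. ?u k) \<le> Lcm (?u ` {h..n}) * C"
    using C_pos by (intro dvd_imp_le) auto
  have "(\<Prod>k\<in>{h..n}. ?u k) = ?u h * (\<Prod>t\<in>{1..n-h}. ?u (h + t))"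
    using h prod.shift_bounds_cl_nat_ivl[of ?u 1 h "n - h"]
    by (simp add: prod.atLeast_Suc_atMost add.commute)
  moreover have "b * q ^ (h - 1) \<le> ?u h"
    using mult_le_mono2[OF power_le_qint[OF q h(1)], of b] by (simp add: useq_def trans_le_add2)
  moreover have "b * q ^ h * qint q t \<le> ?u (h + t)" for t
    using useq_add[OF q, of a b h t] by linarith
  then have "(\<Prod>t\<in>{1..n-h}. b * q ^ h * qint q t) \<le> (\<Prod>t\<in>{1..n-h}. ?u (h + t))"
    by (simp add: prod_mono)
  moreover have "(\<Prod>t\<in>{1..n-h}. b * q ^ h * qint q t) = (b * q ^ h) ^ (n - h) * C"
    by (simp add: C_def prod.distrib)
  ultimately have "b * q ^ (h - 1) * ((b * q ^ h) ^ (n - h) * C) \<le> (\<Prod>k\<in>{h..n}. ?u k)"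
    by (metis mult_le_mono)
  also note upper
  finally have "b ^ (n - h + 1) * q ^ (h - 1 + h * (n - h)) * C \<le> Lcm (?u ` {h..n}) * C"
    by (simp add: power_add power_mult power_mult_distrib mult_ac)
  then show ?thesis
    using C_pos by simp
qed

lemma Lcm_useq_ge_gcd:
  fixes q u0 r h n :: nat
  assumes q: "q \<ge> 2" and "u0 > 0" "coprime (u0 + r) q" and h: "1 \<le> h" "h \<le> n"
  shows "gcd u0 r * ((r div gcd u0 r) ^ (n - h + 1) * q ^ (h - 1 + h * (n - h)))
           \<le> Lcm (useq q u0 r ` {h..n})"
proof -
  define d where "d = gcd u0 r"
  define a where "a = u0 div d"
  define b where "b = r div d"
  have u0: "u0 = d * a" and r: "r = d * b"
    by (simp_all add: d_def a_def b_def)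
  have "coprime a b"
    unfolding a_def b_def d_def using \<open>u0 > 0\<close> by (intro div_gcd_coprime) auto
  moreover have "coprime (a + b) q"
    using \<open>coprime (u0 + r) q\<close> by (simp add: u0 r flip: distrib_left)
  ultimately have "d * (b ^ (n - h + 1) * q ^ (h - 1 + h * (n - h))) \<le> d * Lcm (useq q a b ` {h..n})"
    using Lcm_useq_ge[OF q _ _ h] by (intro mult_le_mono2)
  also have "useq q u0 r ` {h..n} = (*) d ` useq q a b ` {h..n}"
    by (auto simp: u0 r useq_mult)
  then have "d * Lcm (useq q a b ` {h..n}) = Lcm (useq q u0 r ` {h..n})"
    using h(2) by (simp add: Lcm_mult)
  finally show ?thesis
    by (simp only: d_def b_def)
qed

lemma powr_le_power:
  fixes x s :: real
  assumes "1 \<le> x" "s \<le> real k"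
  shows "x powr s \<le> x ^ k"
  using powr_mono[OF assms(2,1)] assms(1) by (simp add: powr_realpow)

lemma half_exponent_bounds:
  fixes n h :: nat
  assumes "h = n div 2" "h \<ge> 1"
  shows "real n / 2 + 1 \<le> real (n - h + 1)"
    and "real n * (real n - 2) / 4 \<le> real (h - 1 + h * (n - h))"
proof -
  have "n = 2 * h \<or> n = 2 * h + 1"
    using assms(1) by auto
  then show "real n / 2 + 1 \<le> real (n - h + 1)"
    and "real n * (real n - 2) / 4 \<le> real (h - 1 + h * (n - h))"
    using assms(2) by (auto simp: of_nat_diff field_simps)
qed

theorem theorem4:
  fixes q u0 r n m :: nat
  assumes "q \<ge> 2" and "u0 > 0" and "r > 0" and "coprime (u0 + r) q"
    and "n > 0" and "m > 0" and "m \<le> n div 2"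
  shows "real (Lcm (useq q u0 r ` {m..n})) \<ge>
           real (gcd u0 r) * (real r / real (gcd u0 r)) powr (real n / 2 + 1)
             * real q powr (real n * (real n - 2) / 4)"
proof -
  define h where "h = n div 2"
  define b where "b = r div gcd u0 r"
  have h: "1 \<le> h" "m \<le> h" "h \<le> n"
    using assms(6,7) by (auto simp: h_def)
  have "0 \<notin> useq q u0 r ` {m..n}"
    using assms(2) by (auto simp: useq_def)
  then have Lcm_pos: "Lcm (useq q u0 r ` {m..n}) > 0"
    by (simp add: Lcm_0_iff zero_less_iff_neq_zero)
  have "Lcm (useq q u0 r ` {h..n}) \<le> Lcm (useq q u0 r ` {m..n})"
    using h(2) by (intro dvd_imp_le[OF _ Lcm_pos] Lcm_subset image_mono) auto
  with Lcm_useq_ge_gcd[OF assms(1,2,4) h(1,3)]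
  have "gcd u0 r * (b ^ (n - h + 1) * q ^ (h - 1 + h * (n - h))) \<le> Lcm (useq q u0 r ` {m..n})"
    unfolding b_def by (rule le_trans)
  then have lcm: "real (gcd u0 r) * (real b ^ (n - h + 1) * real q ^ (h - 1 + h * (n - h)))
                    \<le> real (Lcm (useq q u0 r ` {m..n}))"
    by (simp flip: of_nat_mult of_nat_power)
  have "b > 0"
    using assms(2,3) by (simp add: b_def div_greater_zero_iff gcd_le2_nat)
  have "real (gcd u0 r) * real b powr (real n / 2 + 1) * real q powr (real n * (real n - 2) / 4)
          \<le> real (gcd u0 r) * (real b ^ (n - h + 1) * real q ^ (h - 1 + h * (n - h)))"
    unfolding mult.assoc using \<open>b > 0\<close> assms(1) half_exponent_bounds[OF h_def h(1)]
    by (intro mult_left_mono mult_mono powr_le_power) auto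
  also note lcm
  finally show ?thesis
    by (simp add: b_def real_of_nat_div)
qed

end
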